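(* Let $K\subseteq\mathbb{R}^m$ be closed, $f:\mathbb{R}^n\to\mathbb{R}$, $G:\mathbb{R}^n\to\mathbb{R}^m$, $\Psi=\{x\in\mathbb{R}^n:G(x)\in K\}$ and let $x^*\in\Psi$. Suppose that $f$ is second-order epi-regular at $x^*$ and $G$ is second-order gph-regular at $x^*$. Suppose that MSCQ for $\Psi$ holds at $x^*$ and that $K$ is outer second-order regular at $G(x^* )$ in every direction $G'(x^*;d)\in\mathcal{T}_K(G(x^* ))$. Assume that for every direction $d$ with $G'(x^*;d)\in\mathcal{T}_K(G(x^* ))$ we have $f'(x^*;d)\ge0$, and that for every $d\in\mathcal{C}(x^* )\setminus\{0\}$ the optimization problem $$\min_w\ f''(x^*;d,w)\quad\text{s.t. } G''(x^*;d,w)\in\mathcal{T}^2_K(G(x^* );G'(x^*;d))$$ has a positive optimal objective value, where $\mathcal{C}(x^* ):=\{d\in\mathbb{R}^n: G'(x^*;d)\in\mathcal{T}_K(G(x^* )),\ f'(x^*;d)\le0\}$. Then the second-order growth condition holds at $x^*$ for the problem $\min f(x)$ s.t. $G(x)\in K$, i.e., there exist $c>0$ and a neighborhood $N$ of $x^*$ with $f(x)\ge f(x^* )+c\|x-x^*\|^2$ for all $x\in\Psi\cap N$.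
   Context: Definitions. For $g:\mathbb{R}^n\to\mathbb{R}^k$: $g'(x;d)=\lim_{t\downarrow0}(g(x+td)-g(x))/t$; $g$ is second-order directionally differentiable at $x$ if for every $d$, $g'(x;d)$ exists and $g''(x;d,w):=\lim_{t\downarrow0}\frac{g(x+td+\frac12t^2w)-g(x)-tg'(x;d)}{\frac12t^2}$ exists for all $w$. $g$ is second-order gph-regular (resp. epi-regular, for $k=1$) at $x^*$ if $g$ is locally Lipschitz continuous and second-order directionally differentiable at $x^*$ and for every $d\in\mathbb{R}^n$ and every path $w:\mathbb{R}_+\to\mathbb{R}^n$ with $tw(t)\to0$ as $t\downarrow0$ there is $r$ with $\|r(t)\|/t^2\to0$ as $t\downarrow0$ such that $g(x^*+td+\frac12t^2w(t))=g(x^* )+tg'(x^*;d)+\frac12t^2g''(x^*;d,w(t))+r(t)$ (resp. "$\ge$" instead of "$=$") for $t\ge0$. For a set $C$ and $x^*\in C$: tangent cone $\mathcal{T}_C(x^* )=\{d:\exists t_k\downarrow0,d^k\to d, x^*+t_kd^k\in C\}$; for $d\in\mathcal{T}_C(x^* )$, outer second-order tangent set $\mathcal{T}^2_C(x^*;d)=\{w:\exists t_k\downarrow0,w^k\to w, x^*+t_kd+\frac12t_k^2w^k\in C\}$; $C$ is outer second-order regular at $x^*$ in direction $d$ if for every sequence $x^*+t_kd+\frac12t_k^2w^k\in C$ with $t_k\downarrow0$, $t_kw^k\to0$, one has $\mathrm{dist}(w^k,\mathcal{T}^2_C(x^*;d))\to0$. MSCQ for $\Psi$ holds at $x^*$ if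 there exist a neighborhood $U$ of $x^*$ and $\kappa>0$ with $\mathrm{dist}(x,\Psi)\le\kappa\,\mathrm{dist}(G(x),K)$ for all $x\in U$. The optimal value of a problem is the infimum of its objective over its feasible set. *)

theory Defs
  imports "HOL-Analysis.Analysis"
begin

definition dir_deriv :: "('a::real_normed_vector \<Rightarrow> 'b::real_normed_vector) \<Rightarrow> 'a \<Rightarrow> 'a \<Rightarrow> 'b" where
  "dir_deriv g x d = Lim (at_right 0) (\<lambda>t. (1 / t) *\<^sub>R (g (x + t *\<^sub>R d) - g x))"

definition dir_differentiable :: "('a::real_normed_vector \<Rightarrow> 'b::real_normed_vector) \<Rightarrow> 'a \<Rightarrow> 'a \<Rightarrow> bool" where
  "dir_differentiable g x d \<longleftrightarrow>
     (\<exists>v. ((\<lambda>t. (1 / t) *\<^sub>R (g (x + t *\<^sub>R d) - g x)) \<longlongrightarrow> v) (at_right 0))"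

definition so_quot :: "('a::real_normed_vector \<Rightarrow> 'b::real_normed_vector) \<Rightarrow> 'a \<Rightarrow> 'a \<Rightarrow> 'a \<Rightarrow> real \<Rightarrow> 'b" where
  "so_quot g x d w t = (2 / t\<^sup>2) *\<^sub>R (g (x + t *\<^sub>R d + (t\<^sup>2 / 2) *\<^sub>R w) - g x - t *\<^sub>R dir_deriv g x d)"

definition so_dir_deriv :: "('a::real_normed_vector \<Rightarrow> 'b::real_normed_vector) \<Rightarrow> 'a \<Rightarrow> 'a \<Rightarrow> 'a \<Rightarrow> 'b" where
  "so_dir_deriv g x d w = Lim (at_right 0) (so_quot g x d w)"

definition so_dir_differentiable :: "('a::real_normed_vector \<Rightarrow> 'b::real_normed_vector) \<Rightarrow> 'a \<Rightarrow> bool" where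
  "so_dir_differentiable g x \<longleftrightarrow>
     (\<forall>d. dir_differentiable g x d \<and> (\<forall>w. \<exists>v. (so_quot g x d w \<longlongrightarrow> v) (at_right 0)))"

definition loc_lipschitz_at :: "('a::real_normed_vector \<Rightarrow> 'b::real_normed_vector) \<Rightarrow> 'a \<Rightarrow> bool" where
  "loc_lipschitz_at g x \<longleftrightarrow> (\<exists>e>0. \<exists>L. L-lipschitz_on (ball x e) g)"

definition so_gph_regular :: "('a::real_normed_vector \<Rightarrow> 'b::real_normed_vector) \<Rightarrow> 'a \<Rightarrow> bool" where
  "so_gph_regular g x \<longleftrightarrow> loc_lipschitz_at g x \<and> so_dir_differentiable g x \<and>
     (\<forall>d. \<forall>w :: real \<Rightarrow> 'a. ((\<lambda>t. t *\<^sub>R w t) \<longlongrightarrow> 0) (at_right 0) \<longrightarrow>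
        (\<exists>r :: real \<Rightarrow> 'b. ((\<lambda>t. norm (r t) / t\<^sup>2) \<longlongrightarrow> 0) (at_right 0) \<and>
          (\<forall>t\<ge>0. g (x + t *\<^sub>R d + (t\<^sup>2 / 2) *\<^sub>R w t) =
                   g x + t *\<^sub>R dir_deriv g x d + (t\<^sup>2 / 2) *\<^sub>R so_dir_deriv g x d (w t) + r t)))"

definition so_epi_regular :: "('a::real_normed_vector \<Rightarrow> real) \<Rightarrow> 'a \<Rightarrow> bool" where
  "so_epi_regular g x \<longleftrightarrow> loc_lipschitz_at g x \<and> so_dir_differentiable g x \<and>
     (\<forall>d. \<forall>w :: real \<Rightarrow> 'a. ((\<lambda>t. t *\<^sub>R w t) \<longlongrightarrow> 0) (at_right 0) \<longrightarrow>
        (\<exists>r :: real \<Rightarrow> real. ((\<lambda>t. \<bar>r t\<bar> / t\<^sup>2) \<longlongrightarrow> 0) (at_right 0) \<and>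
          (\<forall>t\<ge>0. g (x + t *\<^sub>R d + (t\<^sup>2 / 2) *\<^sub>R w t) \<ge>
                   g x + t * dir_deriv g x d + (t\<^sup>2 / 2) * so_dir_deriv g x d (w t) + r t)))"

definition tangent_cone :: "'a::real_normed_vector set \<Rightarrow> 'a \<Rightarrow> 'a set" where
  "tangent_cone C x = {d. \<exists>t dk. (\<forall>k. t k > 0) \<and> t \<longlonglongrightarrow> 0 \<and> dk \<longlonglongrightarrow> d \<and>
                          (\<forall>k. x + t k *\<^sub>R dk k \<in> C)}"

definition so_tangent_set :: "'a::real_normed_vector set \<Rightarrow> 'a \<Rightarrow> 'a \<Rightarrow> 'a set" where
  "so_tangent_set C x d = {w. \<exists>t wk. (\<forall>k. t k > 0) \<and> t \<longlonglongrightarrow> 0 \<and> wk \<longlonglongrightarrow> w \<and>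
                          (\<forall>k. x + t k *\<^sub>R d + ((t k)\<^sup>2 / 2) *\<^sub>R wk k \<in> C)}"

text \<open>Outer second-order regularity; distance to the empty set is +infinity, so the
  second-order tangent set is required to be nonempty whenever such a sequence exists.\<close>
definition outer_so_regular :: "'a::real_normed_vector set \<Rightarrow> 'a \<Rightarrow> 'a \<Rightarrow> bool" where
  "outer_so_regular C x d \<longleftrightarrow>
     (\<forall>t wk. (\<forall>k. t k > 0) \<and> t \<longlonglongrightarrow> 0 \<and> (\<lambda>k. t k *\<^sub>R wk k) \<longlonglongrightarrow> 0 \<and>
             (\<forall>k. x + t k *\<^sub>R d + ((t k)\<^sup>2 / 2) *\<^sub>R wk k \<in> C)
        \<longrightarrow> so_tangent_set C x d \<noteq> {} \<and> (\<lambda>k. infdist (wk k) (so_tangent_set C x d)) \<longlonglongrightarrow> 0)"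

definition MSCQ :: "('a::real_normed_vector \<Rightarrow> 'b::real_normed_vector) \<Rightarrow> 'b set \<Rightarrow> 'a \<Rightarrow> bool" where
  "MSCQ G K x \<longleftrightarrow> (\<exists>U \<kappa>. open U \<and> x \<in> U \<and> \<kappa> > 0 \<and>
       (\<forall>y\<in>U. infdist y {z. G z \<in> K} \<le> \<kappa> * infdist (G y) K))"

definition critical_cone :: "('a::real_normed_vector \<Rightarrow> real) \<Rightarrow> ('a \<Rightarrow> 'b::real_normed_vector) \<Rightarrow> 'b set \<Rightarrow> 'a \<Rightarrow> 'a set" where
  "critical_cone f G K x = {d. dir_deriv G x d \<in> tangent_cone K (G x) \<and> dir_deriv f x d \<le> 0}"

end

theory Submission
  imports Defs
begin

text \<open>Suppose the growth condition fails. Then there are feasible points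
  \<open>x\<^sub>k = x\<^sup>* + t\<^sub>k d\<^sub>k\<close> with \<open>t\<^sub>k \<rightarrow> 0\<close>, \<open>d\<^sub>k \<rightarrow> d\<close>, \<open>\<parallel>d\<parallel> = 1\<close> and
  \<open>f(x\<^sub>k) < f(x\<^sup>*) + o(t\<^sub>k\<^sup>2)\<close>. Directional derivatives of locally Lipschitz maps are
  Hadamard derivatives, so \<open>d\<close> is a nonzero critical direction. Writing
  \<open>x\<^sub>k = x\<^sup>* + t\<^sub>k d + t\<^sub>k\<^sup>2/2 w\<^sub>k\<close> with \<open>t\<^sub>k w\<^sub>k \<rightarrow> 0\<close>, gph-regularity of \<open>G\<close> and outer
  second-order regularity of \<open>K\<close> show that \<open>G''(x\<^sup>*;d,w\<^sub>k)\<close> approaches the second-order tangent set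
  of \<open>K\<close>; MSCQ, which passes to second-order tangent sets, then yields feasible points
  \<open>\<hat>w\<^sub>k\<close> of the second-order problem with \<open>\<parallel>\<hat>w\<^sub>k - w\<^sub>k\<parallel> \<rightarrow> 0\<close>. Epi-regularity of \<open>f\<close> and the
  Lipschitz continuity of \<open>f''(x\<^sup>*;d,\<cdot>)\<close> give \<open>f(x\<^sub>k) - f(x\<^sup>*) \<ge> t\<^sub>k\<^sup>2/2 (c\<^sub>0 - o(1))\<close>,
  where \<open>c\<^sub>0 > 0\<close> bounds the optimal value of the second-order problem from below.\<close>

lemma infdist_less_approx:
  assumes "A \<noteq> {}" "e > 0"
  obtains a where "a \<in> A" "dist x a < infdist x A + e"
proof -
  have "(INF a\<in>A. dist x a) < infdist x A + e" using assms by (simp add: infdist_notempty)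
  then show ?thesis using assms(1) that by (subst (asm) cINF_less_iff) auto
qed

lemma INF_ereal_pos_lower_bound:
  assumes "0 < (INF x\<in>A. ereal (h x))"
  shows "\<exists>c>0. \<forall>x\<in>A. c \<le> h x"
proof -
  obtain z where z: "0 < ereal z" "ereal z < (INF x\<in>A. ereal (h x))"
    using ereal_dense2 assms by blast
  have "ereal z < ereal (h x)" if "x \<in> A" for x
    using z(2) INF_lower[OF that, of "\<lambda>x. ereal (h x)"] by (rule less_le_trans)
  then have "z \<le> h x" if "x \<in> A" for x using that by fastforce
  then show ?thesis using z(1) by auto
qed

lemma positive_null_seq_inj_subseq:
  fixes s :: "nat \<Rightarrow> real"
  assumes pos: "\<And>k. s k > 0" and lim: "s \<longlonglongrightarrow> 0"
  obtains \<phi> :: "nat \<Rightarrow> nat" where "strict_mono \<phi>" "inj (s \<circ> \<phi>)"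
proof -
  have "\<exists>m>n. s m < s n" for n
  proof -
    obtain M where "\<forall>m\<ge>M. s m < s n"
      using order_tendstoD(2)[OF lim pos[of n]] by (auto simp: eventually_sequentially)
    then show ?thesis by (intro exI[of _ "max M (Suc n)"]) auto
  qed
  then obtain g where g: "\<And>n. g n > n \<and> s (g n) < s n" by metis
  define \<phi> where "\<phi> k = (g ^^ k) 0" for k
  have suc: "\<phi> (Suc k) = g (\<phi> k)" for k by (simp add: \<phi>_def)
  have "strict_mono \<phi>" unfolding strict_mono_Suc_iff using g suc by auto
  moreover have "strict_mono (\<lambda>k. - s (\<phi> k))" unfolding strict_mono_Suc_iff using g suc by auto
  then have "inj (\<lambda>k. - s (\<phi> k))" by (rule strict_mono_imp_inj_on)
  then have "inj (s \<circ> \<phi>)" by (auto simp: inj_def)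
  ultimately show ?thesis using that by blast
qed

lemma unit_direction_convergent_subseq:
  fixes y :: "nat \<Rightarrow> 'a::{real_normed_vector, heine_borel}"
  assumes "\<And>k. y k \<noteq> x0"
  shows "\<exists>(\<phi>::nat \<Rightarrow> nat) d. strict_mono \<phi> \<and> norm d = 1 \<and>
    (\<lambda>k. (1 / norm (y (\<phi> k) - x0)) *\<^sub>R (y (\<phi> k) - x0)) \<longlonglongrightarrow> d"
proof -
  define u where "u k = (1 / norm (y k - x0)) *\<^sub>R (y k - x0)" for k
  have unit: "norm (u k) = 1" for k using assms[of k] by (simp add: u_def)
  then have "bounded (range u)" by (auto simp: bounded_iff)
  then obtain d \<phi> where \<phi>: "strict_mono \<phi>" and lim: "(u \<circ> \<phi>) \<longlonglongrightarrow> d"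
    using bounded_imp_convergent_subsequence by blast
  have "(\<lambda>k. norm ((u \<circ> \<phi>) k)) \<longlonglongrightarrow> norm d" by (rule tendsto_norm[OF lim])
  then have "norm d = 1" using unit by (simp add: LIMSEQ_const_iff)
  then show ?thesis using \<phi> lim by (auto simp: u_def comp_def)
qed

text \<open>The second-order regularity conditions quantify over paths \<open>t \<mapsto> w(t)\<close>; along injective
  parameters a sequence is such a path, and \<open>LIMSEQ_by_inj_subseqs\<close> removes the injectivity.\<close>
lemma inj_seq_interpolating_path:
  fixes t :: "nat \<Rightarrow> real" and w :: "nat \<Rightarrow> 'a::real_normed_vector"
  assumes inj: "inj t" and pos: "\<And>k. t k > 0" and tw: "(\<lambda>k. t k *\<^sub>R w k) \<longlonglongrightarrow> 0"
  obtains p where "((\<lambda>s. s *\<^sub>R p s) \<longlongrightarrow> 0) (at_right 0)" "\<And>k. p (t k) = w k"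
proof -
  define p where "p s = (if s \<in> range t then w (inv t s) else 0)" for s
  have pt: "p (t k) = w k" for k using inj by (simp add: p_def)
  have "((\<lambda>s. s *\<^sub>R p s) \<longlongrightarrow> 0) (at_right 0)"
    unfolding tendsto_iff
  proof (intro allI impI)
    fix e :: real assume e: "e > 0"
    obtain N where N: "\<And>k. k \<ge> N \<Longrightarrow> norm (t k *\<^sub>R w k) < e"
      using tw e unfolding LIMSEQ_iff by auto
    define b where "b = Min (insert 1 (t ` {..<N}))"
    have b0: "b > 0" unfolding b_def using pos by (subst Min_gr_iff) auto
    have bt: "k < N \<Longrightarrow> b \<le> t k" for k unfolding b_def by (intro Min_le) auto
    show "eventually (\<lambda>s. dist (s *\<^sub>R p s) 0 < e) (at_right 0)"
      unfolding eventually_at_right_field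
    proof (intro exI[of _ b] conjI allI impI)
      fix y :: real assume y: "y > 0" "y < b"
      show "dist (y *\<^sub>R p y) 0 < e"
      proof (cases "y \<in> range t")
        case True
        then obtain k where k: "y = t k" by auto
        have "k \<ge> N" using bt[of k] y k by (cases "k < N") auto
        then show ?thesis using N[of k] k pt by simp
      next
        case False
        then show ?thesis using e by (simp add: p_def)
      qed
    qed (use b0 in auto)
  qed
  then show ?thesis using that pt by blast
qed

lemma LIMSEQ_by_inj_subseqs:
  fixes t :: "nat \<Rightarrow> real" and w :: "nat \<Rightarrow> 'a::real_normed_vector"
    and F :: "real \<Rightarrow> 'a \<Rightarrow> 'b::metric_space"
  assumes pos: "\<And>k. t k > 0" and lim: "t \<longlonglongrightarrow> 0" and tw: "(\<lambda>k. t k *\<^sub>R w k) \<longlonglongrightarrow> 0"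
    and inj_case: "\<And>s v. inj s \<Longrightarrow> (\<And>k. s k > 0) \<Longrightarrow> s \<longlonglongrightarrow> 0 \<Longrightarrow> (\<lambda>k. s k *\<^sub>R v k) \<longlonglongrightarrow> 0 \<Longrightarrow>
      (\<lambda>k. F (s k) (v k)) \<longlonglongrightarrow> L"
  shows "(\<lambda>k. F (t k) (w k)) \<longlonglongrightarrow> L"
proof (rule ccontr)
  assume "\<not> (\<lambda>k. F (t k) (w k)) \<longlonglongrightarrow> L"
  then obtain e where e: "e > 0" and "\<not> eventually (\<lambda>k. dist (F (t k) (w k)) L < e) sequentially"
    unfolding tendsto_iff by blast
  then have "frequently (\<lambda>k. e \<le> dist (F (t k) (w k)) L) sequentially"
    by (simp add: not_eventually not_less)
  then have "infinite {k. e \<le> dist (F (t k) (w k)) L}"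
    by (simp add: frequently_cofinite[symmetric] cofinite_eq_sequentially)
  from infinite_enumerate[OF this] obtain \<psi> :: "nat \<Rightarrow> nat"
    where \<psi>: "strict_mono \<psi>" "\<And>k. e \<le> dist (F (t (\<psi> k)) (w (\<psi> k))) L"
    by blast
  have "\<And>k. (t \<circ> \<psi>) k > 0" using pos by simp
  then obtain \<phi> :: "nat \<Rightarrow> nat" where \<phi>: "strict_mono \<phi>" "inj (t \<circ> \<psi> \<circ> \<phi>)"
    using positive_null_seq_inj_subseq[OF _ LIMSEQ_subseq_LIMSEQ[OF lim \<psi>(1)]] by blast
  have \<sigma>: "strict_mono (\<psi> \<circ> \<phi>)" using strict_mono_o[OF \<psi>(1) \<phi>(1)] .
  have "(\<lambda>k. F (t (\<psi> (\<phi> k))) (w (\<psi> (\<phi> k)))) \<longlonglongrightarrow> L"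
  proof (rule inj_case)
    show "inj (\<lambda>k. t (\<psi> (\<phi> k)))" using \<phi>(2) by (simp add: comp_def)
    show "(\<lambda>k. t (\<psi> (\<phi> k))) \<longlonglongrightarrow> 0" using LIMSEQ_subseq_LIMSEQ[OF lim \<sigma>] by (simp add: comp_def)
    show "(\<lambda>k. t (\<psi> (\<phi> k)) *\<^sub>R w (\<psi> (\<phi> k))) \<longlonglongrightarrow> 0"
      using LIMSEQ_subseq_LIMSEQ[OF tw \<sigma>] by (simp add: comp_def)
  qed (rule pos)
  then have "eventually (\<lambda>k. dist (F (t (\<psi> (\<phi> k))) (w (\<psi> (\<phi> k)))) L < e) sequentially"
    using e by (rule tendstoD)
  then obtain N where "\<forall>k\<ge>N. dist (F (t (\<psi> (\<phi> k))) (w (\<psi> (\<phi> k)))) L < e"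
    by (auto simp: eventually_sequentially)
  then show False using \<psi>(2) not_le by blast
qed

lemma positive_null_seq_filterlim_at_right:
  fixes t :: "nat \<Rightarrow> real"
  assumes "\<And>k. t k > 0" "t \<longlonglongrightarrow> 0"
  shows "filterlim t (at_right 0) sequentially"
  using assms by (intro tendsto_imp_filterlim_at_right always_eventually) auto

lemma dir_deriv_tendsto:
  assumes "dir_differentiable g x d"
  shows "((\<lambda>t. (1 / t) *\<^sub>R (g (x + t *\<^sub>R d) - g x)) \<longlongrightarrow> dir_deriv g x d) (at_right 0)"
proof -
  from assms obtain v where v: "((\<lambda>t. (1 / t) *\<^sub>R (g (x + t *\<^sub>R d) - g x)) \<longlongrightarrow> v) (at_right 0)"
    unfolding dir_differentiable_def by blast
  then have "dir_deriv g x d = v" unfolding dir_deriv_def by (intro tendsto_Lim) auto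
  then show ?thesis using v by simp
qed

lemma so_dir_deriv_tendsto:
  assumes "so_dir_differentiable g x"
  shows "(so_quot g x d w \<longlongrightarrow> so_dir_deriv g x d w) (at_right 0)"
proof -
  from assms obtain v where v: "(so_quot g x d w \<longlongrightarrow> v) (at_right 0)"
    unfolding so_dir_differentiable_def by blast
  then have "so_dir_deriv g x d w = v" unfolding so_dir_deriv_def by (intro tendsto_Lim) auto
  then show ?thesis using v by simp
qed

lemma so_quot_expansion:
  assumes "t \<noteq> 0"
  shows "g (x + t *\<^sub>R d + (t\<^sup>2 / 2) *\<^sub>R w) = g x + t *\<^sub>R dir_deriv g x d + (t\<^sup>2 / 2) *\<^sub>R so_quot g x d w t"
proof -
  have "(t\<^sup>2 / 2) * (2 / t\<^sup>2) = 1" using assms by (simp add: field_simps)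
  then show ?thesis by (simp add: so_quot_def scaleR_scaleR)
qed

lemma dir_deriv_seq_tendsto:
  fixes g :: "'a::real_normed_vector \<Rightarrow> 'b::real_normed_vector"
  assumes lip: "loc_lipschitz_at g x" and diff: "dir_differentiable g x d"
    and t: "\<And>k. t k > 0" "t \<longlonglongrightarrow> 0" and dk: "dk \<longlonglongrightarrow> d"
  shows "(\<lambda>k. (1 / t k) *\<^sub>R (g (x + t k *\<^sub>R dk k) - g x)) \<longlonglongrightarrow> dir_deriv g x d"
proof -
  obtain e L where e: "e > 0" and L: "L-lipschitz_on (ball x e) g"
    using lip unfolding loc_lipschitz_at_def by blast
  have near: "(\<lambda>k. x + t k *\<^sub>R v k) \<longlonglongrightarrow> x" if "v \<longlonglongrightarrow> d" for v
    using tendsto_add[OF tendsto_const tendsto_scaleR[OF t(2) that], of x] by simp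
  have "eventually (\<lambda>k. x + t k *\<^sub>R dk k \<in> ball x e \<and> x + t k *\<^sub>R d \<in> ball x e) sequentially"
    using tendstoD[OF near[OF dk] e] tendstoD[OF near[OF tendsto_const] e]
    by eventually_elim (auto simp: dist_commute)
  then have "eventually (\<lambda>k. norm ((1 / t k) *\<^sub>R (g (x + t k *\<^sub>R dk k) - g (x + t k *\<^sub>R d)))
      \<le> L * norm (dk k - d)) sequentially"
  proof eventually_elim
    case (elim k)
    have "norm (g (x + t k *\<^sub>R dk k) - g (x + t k *\<^sub>R d)) \<le> L * norm (t k *\<^sub>R dk k - t k *\<^sub>R d)"
      using lipschitz_on_normD[OF L] elim by (metis add_diff_cancel_left)
    also have "\<dots> = t k * (L * norm (dk k - d))"
      using t(1)[of k] by (simp add: scaleR_diff_right[symmetric])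
    finally show ?case using t(1)[of k] by (simp add: pos_divide_le_eq mult.commute)
  qed
  moreover have "(\<lambda>k. L * norm (dk k - d)) \<longlonglongrightarrow> 0"
    using tendsto_mult_right_zero[OF tendsto_norm_zero[OF LIM_zero[OF dk]]] .
  ultimately have small: "(\<lambda>k. (1 / t k) *\<^sub>R (g (x + t k *\<^sub>R dk k) - g (x + t k *\<^sub>R d))) \<longlonglongrightarrow> 0"
    by (rule Lim_null_comparison)
  have "(\<lambda>k. (1 / t k) *\<^sub>R (g (x + t k *\<^sub>R d) - g x)) \<longlonglongrightarrow> dir_deriv g x d"
    using filterlim_compose[OF dir_deriv_tendsto[OF diff] positive_null_seq_filterlim_at_right[OF t]] .
  from tendsto_add[OF small this] show ?thesis by (simp add: algebra_simps)
qed

lemma so_dir_deriv_lipschitz: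
  fixes g :: "'a::real_normed_vector \<Rightarrow> 'b::real_normed_vector"
  assumes lip: "loc_lipschitz_at g x" and diff: "so_dir_differentiable g x"
  obtains L where "\<And>d. L-lipschitz_on UNIV (so_dir_deriv g x d)"
proof -
  obtain e L where e: "e > 0" and L: "L-lipschitz_on (ball x e) g"
    using lip unfolding loc_lipschitz_at_def by blast
  have "dist (so_dir_deriv g x d w) (so_dir_deriv g x d w') \<le> L * dist w w'" for d w w'
  proof -
    have conv: "((\<lambda>s. dist (so_quot g x d w s) (so_quot g x d w' s)) \<longlongrightarrow>
        dist (so_dir_deriv g x d w) (so_dir_deriv g x d w')) (at_right 0)"
      by (intro tendsto_dist so_dir_deriv_tendsto diff)
    have "((\<lambda>s. x + s *\<^sub>R d + (s\<^sup>2 / 2) *\<^sub>R v) \<longlongrightarrow> x) (at_right 0)" for v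
    proof -
      have "((\<lambda>s::real. x + s *\<^sub>R d + (s\<^sup>2 / 2) *\<^sub>R v) \<longlongrightarrow> x + 0 *\<^sub>R d + (0\<^sup>2 / 2) *\<^sub>R v) (at_right 0)"
        by (intro tendsto_intros) auto
      then show ?thesis by simp
    qed
    then have near: "eventually (\<lambda>s. x + s *\<^sub>R d + (s\<^sup>2 / 2) *\<^sub>R v \<in> ball x e) (at_right 0)" for v
      using tendstoD e by (fastforce simp: dist_commute)
    have "eventually (\<lambda>s. dist (so_quot g x d w s) (so_quot g x d w' s) \<le> L * dist w w') (at_right 0)"
      using near[of w] near[of w'] eventually_at_right_less[of "0::real"]
    proof eventually_elim
      case (elim s)
      let ?p = "x + s *\<^sub>R d + (s\<^sup>2 / 2) *\<^sub>R w" and ?p' = "x + s *\<^sub>R d + (s\<^sup>2 / 2) *\<^sub>R w'"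
      have "dist (so_quot g x d w s) (so_quot g x d w' s) = (2 / s\<^sup>2) * dist (g ?p) (g ?p')"
        by (simp add: so_quot_def dist_norm scaleR_diff_right[symmetric])
      also have "\<dots> \<le> (2 / s\<^sup>2) * (L * dist ?p ?p')"
        by (intro mult_left_mono lipschitz_onD[OF L]) (use elim in auto)
      also have "dist ?p ?p' = (s\<^sup>2 / 2) * dist w w'"
        by (simp add: dist_norm scaleR_diff_right[symmetric])
      also have "(2 / s\<^sup>2) * (L * ((s\<^sup>2 / 2) * dist w w')) = L * dist w w'"
        using elim by (simp add: field_simps)
      finally show ?case .
    qed
    then show ?thesis
      using tendsto_le[OF trivial_limit_at_right_real tendsto_const conv] by blast
  qed
  then show ?thesis
    using that lipschitz_on_nonneg[OF L] by (metis lipschitz_onI)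
qed

lemma so_gph_regular_seq:
  fixes G :: "'a::real_normed_vector \<Rightarrow> 'b::real_normed_vector"
  assumes reg: "so_gph_regular G x" and t: "\<And>k. t k > 0" "t \<longlonglongrightarrow> 0"
    and tw: "(\<lambda>k. t k *\<^sub>R w k) \<longlonglongrightarrow> 0"
  shows "(\<lambda>k. so_quot G x d (w k) (t k) - so_dir_deriv G x d (w k)) \<longlonglongrightarrow> 0"
proof (rule LIMSEQ_by_inj_subseqs[OF t tw, where F = "\<lambda>s v. so_quot G x d v s - so_dir_deriv G x d v"])
  fix s :: "nat \<Rightarrow> real" and v :: "nat \<Rightarrow> 'a"
  assume s: "inj s" "\<And>k. s k > 0" "s \<longlonglongrightarrow> 0" and sv: "(\<lambda>k. s k *\<^sub>R v k) \<longlonglongrightarrow> 0"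
  obtain p where p: "((\<lambda>h. h *\<^sub>R p h) \<longlongrightarrow> 0) (at_right 0)" "\<And>k. p (s k) = v k"
    using inj_seq_interpolating_path[OF s(1,2) sv] by blast
  obtain r where r: "((\<lambda>h. norm (r h) / h\<^sup>2) \<longlongrightarrow> 0) (at_right 0)"
    and eq: "\<And>h. h \<ge> 0 \<Longrightarrow> G (x + h *\<^sub>R d + (h\<^sup>2 / 2) *\<^sub>R p h) =
               G x + h *\<^sub>R dir_deriv G x d + (h\<^sup>2 / 2) *\<^sub>R so_dir_deriv G x d (p h) + r h"
    using reg p(1) unfolding so_gph_regular_def by blast
  have "so_quot G x d (v k) (s k) - so_dir_deriv G x d (v k) = (2 / (s k)\<^sup>2) *\<^sub>R r (s k)" for k
  proof -
    have "so_quot G x d (v k) (s k)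
        = (2 / (s k)\<^sup>2) *\<^sub>R (((s k)\<^sup>2 / 2) *\<^sub>R so_dir_deriv G x d (v k) + r (s k))"
      unfolding so_quot_def using eq[of "s k"] s(2)[of k] p(2)[of k] by simp
    also have "\<dots> = so_dir_deriv G x d (v k) + (2 / (s k)\<^sup>2) *\<^sub>R r (s k)"
      using s(2)[of k] by (simp add: scaleR_add_right)
    finally show ?thesis by simp
  qed
  moreover have "(\<lambda>k. 2 * (norm (r (s k)) / (s k)\<^sup>2)) \<longlonglongrightarrow> 0"
    using tendsto_mult_right_zero[OF filterlim_compose[OF r positive_null_seq_filterlim_at_right[OF s(2,3)]]]
    by simp
  ultimately show "(\<lambda>k. so_quot G x d (v k) (s k) - so_dir_deriv G x d (v k)) \<longlonglongrightarrow> 0"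
    using tendsto_norm_zero_cancel[of "\<lambda>k. (2 / (s k)\<^sup>2) *\<^sub>R r (s k)"] by simp
qed

text \<open>Epi-regularity bounds the second-order quotient only from below, hence the \<open>min 0\<close>.\<close>
lemma so_epi_regular_seq:
  fixes f :: "'a::real_normed_vector \<Rightarrow> real"
  assumes reg: "so_epi_regular f x" and t: "\<And>k. t k > 0" "t \<longlonglongrightarrow> 0"
    and tw: "(\<lambda>k. t k *\<^sub>R w k) \<longlonglongrightarrow> 0"
  shows "(\<lambda>k. min 0 (so_quot f x d (w k) (t k) - so_dir_deriv f x d (w k))) \<longlonglongrightarrow> 0"
proof (rule LIMSEQ_by_inj_subseqs[OF t tw, where F = "\<lambda>s v. min 0 (so_quot f x d v s - so_dir_deriv f x d v)"])
  fix s :: "nat \<Rightarrow> real" and v :: "nat \<Rightarrow> 'a"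
  assume s: "inj s" "\<And>k. s k > 0" "s \<longlonglongrightarrow> 0" and sv: "(\<lambda>k. s k *\<^sub>R v k) \<longlonglongrightarrow> 0"
  obtain p where p: "((\<lambda>h. h *\<^sub>R p h) \<longlongrightarrow> 0) (at_right 0)" "\<And>k. p (s k) = v k"
    using inj_seq_interpolating_path[OF s(1,2) sv] by blast
  obtain r where r: "((\<lambda>h. \<bar>r h\<bar> / h\<^sup>2) \<longlongrightarrow> 0) (at_right 0)"
    and ineq: "\<And>h. h \<ge> 0 \<Longrightarrow> f (x + h *\<^sub>R d + (h\<^sup>2 / 2) *\<^sub>R p h) \<ge>
               f x + h * dir_deriv f x d + (h\<^sup>2 / 2) * so_dir_deriv f x d (p h) + r h"
    using reg p(1) unfolding so_epi_regular_def by blast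
  define E where "E k = 2 * (\<bar>r (s k)\<bar> / (s k)\<^sup>2)" for k
  have lower: "- E k \<le> min 0 (so_quot f x d (v k) (s k) - so_dir_deriv f x d (v k))" for k
  proof -
    have sk: "s k > 0" by (rule s(2))
    have "so_dir_deriv f x d (v k) + 2 * (r (s k) / (s k)\<^sup>2)
        = (2 / (s k)\<^sup>2) * ((s k)\<^sup>2 / 2 * so_dir_deriv f x d (v k) + r (s k))"
      using sk by (simp add: field_simps)
    also have "\<dots> \<le> (2 / (s k)\<^sup>2) *
        (f (x + s k *\<^sub>R d + ((s k)\<^sup>2 / 2) *\<^sub>R v k) - f x - s k * dir_deriv f x d)"
      using ineq[of "s k"] sk p(2)[of k] by (intro mult_left_mono) auto
    also have "\<dots> = so_quot f x d (v k) (s k)" by (simp add: so_quot_def)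
    finally have "so_dir_deriv f x d (v k) + 2 * (r (s k) / (s k)\<^sup>2) \<le> so_quot f x d (v k) (s k)" .
    moreover have "- (\<bar>r (s k)\<bar> / (s k)\<^sup>2) \<le> r (s k) / (s k)\<^sup>2"
      unfolding minus_divide_left by (intro divide_right_mono) auto
    moreover have "0 \<le> E k" by (simp add: E_def)
    ultimately show ?thesis unfolding E_def min.bounded_iff by linarith
  qed
  have "E \<longlonglongrightarrow> 0"
    using tendsto_mult_right_zero[OF filterlim_compose[OF r positive_null_seq_filterlim_at_right[OF s(2,3)]]]
    by (simp add: E_def[abs_def])
  then have "(\<lambda>k. - E k) \<longlonglongrightarrow> 0"
    using tendsto_minus by fastforce
  from tendsto_sandwich[OF always_eventually always_eventually this tendsto_const]
  show "(\<lambda>k. min 0 (so_quot f x d (v k) (s k) - so_dir_deriv f x d (v k))) \<longlonglongrightarrow> 0"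
    using lower by auto
qed

lemma so_tangent_set_preimage:
  fixes G :: "'a::real_normed_vector \<Rightarrow> 'b::real_normed_vector"
  assumes reg: "so_gph_regular G x" and w: "w \<in> so_tangent_set {z. G z \<in> K} x d"
  shows "so_dir_deriv G x d w \<in> so_tangent_set K (G x) (dir_deriv G x d)"
proof -
  obtain t wk where t: "\<And>k. t k > 0" "t \<longlonglongrightarrow> 0" and wk: "wk \<longlonglongrightarrow> w"
    and feas: "\<And>k. G (x + t k *\<^sub>R d + ((t k)\<^sup>2 / 2) *\<^sub>R wk k) \<in> K"
    using w unfolding so_tangent_set_def by blast
  obtain L where L: "\<And>d. L-lipschitz_on UNIV (so_dir_deriv G x d)"
    using so_dir_deriv_lipschitz reg unfolding so_gph_regular_def by blast
  have "(\<lambda>k. t k *\<^sub>R wk k) \<longlonglongrightarrow> 0"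
    using tendsto_scaleR[OF t(2) wk] by simp
  then have "(\<lambda>k. so_quot G x d (wk k) (t k) - so_dir_deriv G x d (wk k)) \<longlonglongrightarrow> 0"
    by (rule so_gph_regular_seq[OF reg t])
  moreover have "(\<lambda>k. so_dir_deriv G x d (wk k)) \<longlonglongrightarrow> so_dir_deriv G x d w"
    by (intro continuous_on_tendsto_compose[OF lipschitz_on_continuous_on[OF L] wk]) auto
  ultimately have "(\<lambda>k. so_quot G x d (wk k) (t k)) \<longlonglongrightarrow> so_dir_deriv G x d w"
    using tendsto_add by force
  moreover have "G x + t k *\<^sub>R dir_deriv G x d + ((t k)\<^sup>2 / 2) *\<^sub>R so_quot G x d (wk k) (t k) \<in> K" for k
    using feas[of k] so_quot_expansion[of "t k" G x d "wk k"] t(1)[of k] by simp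
  ultimately show ?thesis
    unfolding so_tangent_set_def mem_Collect_eq
    by (intro exI[of _ t] exI[of _ "\<lambda>k. so_quot G x d (wk k) (t k)"] conjI allI) (use t in auto)
qed

lemma so_tangent_set_bounded_seq:
  fixes w :: "nat \<Rightarrow> 'a::{real_normed_vector, heine_borel}"
  assumes t: "\<And>k. t k > 0" "t \<longlonglongrightarrow> 0"
    and mem: "\<And>k. x + t k *\<^sub>R d + ((t k)\<^sup>2 / 2) *\<^sub>R w k \<in> C"
    and near: "eventually (\<lambda>k. norm (w k - w0) \<le> B) sequentially"
  obtains w' where "w' \<in> so_tangent_set C x d" "norm (w' - w0) \<le> B"
proof -
  obtain N where N: "\<And>k. k \<ge> N \<Longrightarrow> dist w0 (w k) \<le> B"
    using near by (auto simp: eventually_sequentially dist_norm norm_minus_commute)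
  have "bounded (range (\<lambda>k. w (k + N)))"
    by (rule bounded_subset[OF bounded_cball[of w0 B]]) (auto intro!: N)
  then obtain w' r where r: "strict_mono r" and lim: "((\<lambda>k. w (k + N)) \<circ> r) \<longlonglongrightarrow> w'"
    using bounded_imp_convergent_subsequence by blast
  have "w' \<in> cball w0 B"
    by (rule Lim_in_closed_set[OF closed_cball _ _ lim]) (auto intro!: always_eventually N)
  moreover have "(\<lambda>k. t (r k + N)) \<longlonglongrightarrow> 0"
    using LIMSEQ_subseq_LIMSEQ[OF LIMSEQ_ignore_initial_segment[OF t(2)] r] by (simp add: comp_def)
  then have "w' \<in> so_tangent_set C x d"
    unfolding so_tangent_set_def mem_Collect_eq
    by (intro exI[of _ "\<lambda>k. t (r k + N)"] exI[of _ "\<lambda>k. w (r k + N)"] conjI allI)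
      (use t(1) mem lim in \<open>auto simp: comp_def\<close>)
  ultimately show ?thesis
    using that by (simp add: dist_norm norm_minus_commute)
qed

lemma so_point_infdist_approx:
  fixes x d w :: "'a::real_normed_vector"
  assumes "S \<noteq> {}" "s \<noteq> 0" "e > 0"
  obtains v where "x + s *\<^sub>R d + (s\<^sup>2 / 2) *\<^sub>R v \<in> S"
    "s\<^sup>2 / 2 * norm (v - w) < infdist (x + s *\<^sub>R d + (s\<^sup>2 / 2) *\<^sub>R w) S + e"
proof -
  obtain p where p: "p \<in> S" "dist (x + s *\<^sub>R d + (s\<^sup>2 / 2) *\<^sub>R w) p < infdist (x + s *\<^sub>R d + (s\<^sup>2 / 2) *\<^sub>R w) S + e"
    using infdist_less_approx[OF assms(1,3)] by blast
  define v where "v = (2 / s\<^sup>2) *\<^sub>R (p - x - s *\<^sub>R d)"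
  have "p = x + s *\<^sub>R d + (s\<^sup>2 / 2) *\<^sub>R v" using assms(2) by (simp add: v_def)
  moreover have "dist (x + s *\<^sub>R d + (s\<^sup>2 / 2) *\<^sub>R w) p = s\<^sup>2 / 2 * norm (v - w)"
    unfolding calculation by (simp add: dist_norm scaleR_diff_right[symmetric] norm_minus_commute)
  ultimately show ?thesis using that p by simp
qed

lemma infdist_so_point_le:
  assumes "s \<noteq> 0" "G x + s *\<^sub>R dir_deriv G x d + (s\<^sup>2 / 2) *\<^sub>R z \<in> K"
  shows "infdist (G (x + s *\<^sub>R d + (s\<^sup>2 / 2) *\<^sub>R w)) K \<le> s\<^sup>2 / 2 * norm (so_quot G x d w s - z)"
proof -
  have "infdist (G (x + s *\<^sub>R d + (s\<^sup>2 / 2) *\<^sub>R w)) K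
      \<le> dist (G (x + s *\<^sub>R d + (s\<^sup>2 / 2) *\<^sub>R w)) (G x + s *\<^sub>R dir_deriv G x d + (s\<^sup>2 / 2) *\<^sub>R z)"
    by (rule infdist_le[OF assms(2)])
  also have "\<dots> = s\<^sup>2 / 2 * norm (so_quot G x d w s - z)"
    using so_quot_expansion[of s G x d w] assms(1) by (simp add: dist_norm scaleR_diff_right[symmetric])
  finally show ?thesis .
qed

text \<open>MSCQ moves \<open>x + s d + s\<^sup>2/2 w\<close>, whose image is \<open>O(s\<^sup>2)\<close>-close to \<open>K\<close>, into the feasible set
  at cost \<open>O(s\<^sup>2)\<close>; rescaling and compactness then give a nearby second-order tangent of the
  feasible set.\<close>
lemma MSCQ_so_tangent_estimate:
  fixes G :: "'a::{real_normed_vector, heine_borel} \<Rightarrow> 'b::real_normed_vector"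
  assumes diff: "so_dir_differentiable G x" and Gx: "G x \<in> K"
    and U: "open U" "x \<in> U" and ms: "\<forall>y\<in>U. infdist y {z. G z \<in> K} \<le> \<kappa> * infdist (G y) K"
    and \<kappa>: "\<kappa> \<ge> 0" and u: "u \<in> so_tangent_set K (G x) (dir_deriv G x d)" and e: "e > 0"
  obtains w' where "w' \<in> so_tangent_set {z. G z \<in> K} x d"
    "norm (w' - w) \<le> \<kappa> * norm (so_dir_deriv G x d w - u) + e"
proof -
  let ?\<Psi> = "{z. G z \<in> K}"
  obtain s z where s: "\<And>j. s j > 0" "s \<longlonglongrightarrow> 0" and z: "z \<longlonglongrightarrow> u"
    and zK: "\<And>j. G x + s j *\<^sub>R dir_deriv G x d + ((s j)\<^sup>2 / 2) *\<^sub>R z j \<in> K"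
    using u unfolding so_tangent_set_def by blast
  define y where "y j = x + s j *\<^sub>R d + ((s j)\<^sup>2 / 2) *\<^sub>R w" for j
  define q where "q j = so_quot G x d w (s j)" for j
  have q: "q \<longlonglongrightarrow> so_dir_deriv G x d w"
    unfolding q_def
    using filterlim_compose[OF so_dir_deriv_tendsto[OF diff] positive_null_seq_filterlim_at_right[OF s]] .
  have "y \<longlonglongrightarrow> x + 0 *\<^sub>R d + ((0::real)\<^sup>2 / 2) *\<^sub>R w"
    unfolding y_def by (intro tendsto_intros s(2)) simp
  then have y: "y \<longlonglongrightarrow> x" by simp
  have "\<exists>v. x + s j *\<^sub>R d + ((s j)\<^sup>2 / 2) *\<^sub>R v \<in> ?\<Psi> \<and>
      (s j)\<^sup>2 / 2 * norm (v - w) < infdist (y j) ?\<Psi> + (s j)\<^sup>2 / 2 * (e / 2)" for j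
  proof -
    have "?\<Psi> \<noteq> {}" "s j \<noteq> 0" "(s j)\<^sup>2 / 2 * (e / 2) > 0" using Gx s(1)[of j] e by auto
    from so_point_infdist_approx[OF this, of x d w] show ?thesis unfolding y_def by blast
  qed
  then obtain v where vPsi: "\<And>j. x + s j *\<^sub>R d + ((s j)\<^sup>2 / 2) *\<^sub>R v j \<in> ?\<Psi>"
    and v_near: "\<And>j. (s j)\<^sup>2 / 2 * norm (v j - w) < infdist (y j) ?\<Psi> + (s j)\<^sup>2 / 2 * (e / 2)"
    by metis
  have "eventually (\<lambda>j. norm (v j - w) < \<kappa> * norm (q j - z j) + e / 2) sequentially"
    using topological_tendstoD[OF y U]
  proof eventually_elim
    case (elim j)
    let ?A = "(s j)\<^sup>2 / 2"
    have "infdist (y j) ?\<Psi> \<le> \<kappa> * infdist (G (y j)) K" using ms elim by blast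
    also have "\<dots> \<le> \<kappa> * (?A * norm (q j - z j))"
      using infdist_so_point_le[OF _ zK] s(1)[of j] \<kappa> unfolding y_def q_def by (intro mult_left_mono) auto
    finally have "?A * norm (v j - w) < ?A * (\<kappa> * norm (q j - z j) + e / 2)"
      using v_near[of j] by (simp add: algebra_simps)
    then show ?case using s(1)[of j] by (simp add: mult_less_cancel_left_pos)
  qed
  moreover have "eventually (\<lambda>j. \<kappa> * norm (q j - z j) + e / 2 < \<kappa> * norm (so_dir_deriv G x d w - u) + e)
      sequentially"
    by (rule order_tendstoD[OF tendsto_add[OF tendsto_mult[OF tendsto_const tendsto_norm[OF tendsto_diff[OF q z]]]
          tendsto_const]]) (use e in simp)
  ultimately have "eventually (\<lambda>j. norm (v j - w) \<le> \<kappa> * norm (so_dir_deriv G x d w - u) + e) sequentially"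
    by eventually_elim simp
  then show ?thesis
    using so_tangent_set_bounded_seq[OF s vPsi] that by blast
qed

lemma MSCQ_so_tangent_bound:
  fixes G :: "'a::{real_normed_vector, heine_borel} \<Rightarrow> 'b::real_normed_vector"
  assumes reg: "so_gph_regular G x" and Gx: "G x \<in> K" and mscq: "MSCQ G K x"
  obtains \<kappa> where "\<kappa> > 0"
    "\<And>d w e. so_tangent_set K (G x) (dir_deriv G x d) \<noteq> {} \<Longrightarrow> e > 0 \<Longrightarrow>
       \<exists>w'. so_dir_deriv G x d w' \<in> so_tangent_set K (G x) (dir_deriv G x d) \<and>
         norm (w' - w) \<le> \<kappa> * infdist (so_dir_deriv G x d w) (so_tangent_set K (G x) (dir_deriv G x d)) + e"
proof -
  obtain U \<kappa> where U: "open U" "x \<in> U" and \<kappa>: "\<kappa> > 0"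
    and ms: "\<forall>y\<in>U. infdist y {z. G z \<in> K} \<le> \<kappa> * infdist (G y) K"
    using mscq unfolding MSCQ_def by blast
  have diff: "so_dir_differentiable G x" using reg unfolding so_gph_regular_def by blast
  have "\<exists>w'. so_dir_deriv G x d w' \<in> so_tangent_set K (G x) (dir_deriv G x d) \<and>
         norm (w' - w) \<le> \<kappa> * infdist (so_dir_deriv G x d w) (so_tangent_set K (G x) (dir_deriv G x d)) + e"
    if T2: "so_tangent_set K (G x) (dir_deriv G x d) \<noteq> {}" and e: "e > 0" for d w e
  proof -
    let ?T2 = "so_tangent_set K (G x) (dir_deriv G x d)" and ?g2w = "so_dir_deriv G x d w"
    have "e / (2 * \<kappa>) > 0" using \<kappa> e by simp
    then obtain u where u: "u \<in> ?T2" "dist ?g2w u < infdist ?g2w ?T2 + e / (2 * \<kappa>)"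
      using infdist_less_approx[OF T2] by blast
    obtain w' where w': "w' \<in> so_tangent_set {z. G z \<in> K} x d" "norm (w' - w) \<le> \<kappa> * norm (?g2w - u) + e / 2"
      using MSCQ_so_tangent_estimate[OF diff Gx U ms _ u(1), of "e / 2" w] \<kappa> e by auto
    have "\<kappa> * norm (?g2w - u) \<le> \<kappa> * (infdist ?g2w ?T2 + e / (2 * \<kappa>))"
      using u(2) \<kappa> by (intro mult_left_mono) (auto simp: dist_norm)
    also have "\<dots> = \<kappa> * infdist ?g2w ?T2 + e / 2"
      using \<kappa> by (simp add: algebra_simps)
    finally show ?thesis
      using so_tangent_set_preimage[OF reg w'(1)] w'(2) by fastforce
  qed
  with \<kappa> show ?thesis using that by blast
qed

lemma scaled_so_quot_tendsto_zero:
  fixes G :: "'a::real_normed_vector \<Rightarrow> 'b::real_normed_vector"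
  assumes lip: "loc_lipschitz_at G x" and diff: "dir_differentiable G x d"
    and t: "\<And>k. t k > 0" "t \<longlonglongrightarrow> 0" and tw: "(\<lambda>k. t k *\<^sub>R w k) \<longlonglongrightarrow> 0"
  shows "(\<lambda>k. t k *\<^sub>R so_quot G x d (w k) (t k)) \<longlonglongrightarrow> 0"
proof -
  let ?g1 = "dir_deriv G x d"
  define dk where "dk k = d + (t k / 2) *\<^sub>R w k" for k
  have "dk \<longlonglongrightarrow> d"
    using tendsto_add[OF tendsto_const tendsto_scaleR[OF tendsto_const tw], of d "1 / 2"]
    by (simp add: dk_def[abs_def])
  from dir_deriv_seq_tendsto[OF lip diff t this]
  have "(\<lambda>k. 2 *\<^sub>R ((1 / t k) *\<^sub>R (G (x + t k *\<^sub>R dk k) - G x) - ?g1)) \<longlonglongrightarrow> 2 *\<^sub>R (?g1 - ?g1)"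
    by (intro tendsto_intros)
  moreover have "t k *\<^sub>R so_quot G x d (w k) (t k) = 2 *\<^sub>R ((1 / t k) *\<^sub>R (G (x + t k *\<^sub>R dk k) - G x) - ?g1)"
    for k
  proof -
    have "x + t k *\<^sub>R dk k = x + t k *\<^sub>R d + ((t k)\<^sup>2 / 2) *\<^sub>R w k"
      by (simp add: dk_def algebra_simps power2_eq_square)
    then show ?thesis
      using t(1)[of k] by (simp add: so_quot_def algebra_simps power2_eq_square)
  qed
  ultimately show ?thesis by simp
qed

lemma so_gph_regular_infdist_so_tangent_set:
  fixes G :: "'a::real_normed_vector \<Rightarrow> 'b::real_normed_vector"
  assumes reg: "so_gph_regular G x" and osr: "outer_so_regular K (G x) (dir_deriv G x d)"
    and t: "\<And>k. t k > 0" "t \<longlonglongrightarrow> 0" and tw: "(\<lambda>k. t k *\<^sub>R w k) \<longlonglongrightarrow> 0"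
    and feas: "\<And>k. G (x + t k *\<^sub>R d + ((t k)\<^sup>2 / 2) *\<^sub>R w k) \<in> K"
  shows "so_tangent_set K (G x) (dir_deriv G x d) \<noteq> {}"
    and "(\<lambda>k. infdist (so_dir_deriv G x d (w k)) (so_tangent_set K (G x) (dir_deriv G x d))) \<longlonglongrightarrow> 0"
proof -
  let ?g1 = "dir_deriv G x d" and ?T2 = "so_tangent_set K (G x) (dir_deriv G x d)"
  define v where "v k = so_quot G x d (w k) (t k)" for k
  have vK: "G x + t k *\<^sub>R ?g1 + ((t k)\<^sup>2 / 2) *\<^sub>R v k \<in> K" for k
    using feas[of k] so_quot_expansion[of "t k" G x d "w k"] t(1)[of k] by (simp add: v_def)
  have "(\<lambda>k. t k *\<^sub>R v k) \<longlonglongrightarrow> 0"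
    using reg unfolding v_def so_gph_regular_def so_dir_differentiable_def
    by (intro scaled_so_quot_tendsto_zero t tw) auto
  with osr have T2: "?T2 \<noteq> {}" and infdist_v: "(\<lambda>k. infdist (v k) ?T2) \<longlonglongrightarrow> 0"
    using t vK unfolding outer_so_regular_def by blast+
  have "(\<lambda>k. v k - so_dir_deriv G x d (w k)) \<longlonglongrightarrow> 0"
    unfolding v_def by (rule so_gph_regular_seq[OF reg t tw])
  from tendsto_norm[OF this] have "(\<lambda>k. dist (v k) (so_dir_deriv G x d (w k))) \<longlonglongrightarrow> 0"
    unfolding dist_norm by simp
  from tendsto_add[OF infdist_v this]
  have upper: "(\<lambda>k. infdist (v k) ?T2 + dist (v k) (so_dir_deriv G x d (w k))) \<longlonglongrightarrow> 0"
    by simp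
  have "infdist (so_dir_deriv G x d (w k)) ?T2 \<le> infdist (v k) ?T2 + dist (v k) (so_dir_deriv G x d (w k))"
    for k using infdist_triangle[of "so_dir_deriv G x d (w k)" ?T2 "v k"] by (simp only: dist_commute)
  then show "(\<lambda>k. infdist (so_dir_deriv G x d (w k)) ?T2) \<longlonglongrightarrow> 0"
    by (intro tendsto_sandwich[OF always_eventually always_eventually tendsto_const upper])
      (simp_all add: infdist_nonneg)
  show "?T2 \<noteq> {}" by (rule T2)
qed

lemma so_feasible_approx_seq:
  fixes G :: "'a::{real_normed_vector, heine_borel} \<Rightarrow> 'b::real_normed_vector"
  assumes Greg: "so_gph_regular G x" and Gx: "G x \<in> K" and mscq: "MSCQ G K x"
    and osr: "outer_so_regular K (G x) (dir_deriv G x d)"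
    and t: "\<And>k. t k > 0" "t \<longlonglongrightarrow> 0" and tw: "(\<lambda>k. t k *\<^sub>R w k) \<longlonglongrightarrow> 0"
    and feas: "\<And>k. G (x + t k *\<^sub>R d + ((t k)\<^sup>2 / 2) *\<^sub>R w k) \<in> K"
  obtains wh where "\<And>k. so_dir_deriv G x d (wh k) \<in> so_tangent_set K (G x) (dir_deriv G x d)"
    "(\<lambda>k. norm (wh k - w k)) \<longlonglongrightarrow> 0"
proof -
  let ?T2 = "so_tangent_set K (G x) (dir_deriv G x d)"
  note T2 = so_gph_regular_infdist_so_tangent_set[OF Greg osr t tw feas]
  obtain \<kappa> where \<kappa>: "\<kappa> > 0"
    and est: "\<And>d' v e. so_tangent_set K (G x) (dir_deriv G x d') \<noteq> {} \<Longrightarrow> e > 0 \<Longrightarrow>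
       \<exists>v'. so_dir_deriv G x d' v' \<in> so_tangent_set K (G x) (dir_deriv G x d') \<and>
         norm (v' - v) \<le> \<kappa> * infdist (so_dir_deriv G x d' v) (so_tangent_set K (G x) (dir_deriv G x d')) + e"
    using MSCQ_so_tangent_bound[OF Greg Gx mscq] by blast
  have "\<exists>w'. so_dir_deriv G x d w' \<in> ?T2 \<and>
      norm (w' - w k) \<le> \<kappa> * infdist (so_dir_deriv G x d (w k)) ?T2 + inverse (real (Suc k))" for k
    by (rule est[OF T2(1)]) simp
  then obtain wh where wh: "\<And>k. so_dir_deriv G x d (wh k) \<in> ?T2"
    and wh_near: "\<And>k. norm (wh k - w k) \<le> \<kappa> * infdist (so_dir_deriv G x d (w k)) ?T2 + inverse (real (Suc k))"
    by metis
  have "(\<lambda>k. \<kappa> * infdist (so_dir_deriv G x d (w k)) ?T2 + inverse (real (Suc k))) \<longlonglongrightarrow> 0"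
    using tendsto_add[OF tendsto_mult_right_zero[OF T2(2)] LIMSEQ_inverse_real_of_nat] by simp
  from tendsto_sandwich[OF always_eventually always_eventually tendsto_const this]
  have "(\<lambda>k. norm (wh k - w k)) \<longlonglongrightarrow> 0"
    using wh_near by simp
  with wh show ?thesis using that by blast
qed

lemma critical_direction_of_descent_seq:
  fixes f :: "'a::real_normed_vector \<Rightarrow> real" and G :: "'a \<Rightarrow> 'b::real_normed_vector"
  assumes f: "loc_lipschitz_at f x" "dir_differentiable f x d"
    and G: "loc_lipschitz_at G x" "dir_differentiable G x d"
    and t: "\<And>k. t k > 0" "t \<longlonglongrightarrow> 0" and dk: "dk \<longlonglongrightarrow> d"
    and feas: "\<And>k. G (x + t k *\<^sub>R dk k) \<in> K"
    and descent: "\<And>k. f (x + t k *\<^sub>R dk k) < f x + c k * (t k)\<^sup>2" and c: "c \<longlonglongrightarrow> 0"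
  shows "d \<in> critical_cone f G K x"
proof -
  have "(\<lambda>k. (1 / t k) *\<^sub>R (G (x + t k *\<^sub>R dk k) - G x)) \<longlonglongrightarrow> dir_deriv G x d"
    by (rule dir_deriv_seq_tendsto[OF G t dk])
  moreover have "G x + t k *\<^sub>R ((1 / t k) *\<^sub>R (G (x + t k *\<^sub>R dk k) - G x)) \<in> K" for k
    using feas[of k] t(1)[of k] by simp
  ultimately have "dir_deriv G x d \<in> tangent_cone K (G x)"
    unfolding tangent_cone_def mem_Collect_eq using t by blast
  moreover have "dir_deriv f x d \<le> 0"
  proof (rule LIMSEQ_le[OF dir_deriv_seq_tendsto[OF f t dk]])
    show "(\<lambda>k. c k * t k) \<longlonglongrightarrow> 0" using tendsto_mult[OF c t(2)] by simp
    have "(1 / t k) *\<^sub>R (f (x + t k *\<^sub>R dk k) - f x) \<le> c k * t k" for k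
      using descent[of k] t(1)[of k] by (simp add: pos_divide_le_eq power2_eq_square mult.assoc)
    then show "\<exists>N. \<forall>k\<ge>N. (1 / t k) *\<^sub>R (f (x + t k *\<^sub>R dk k) - f x) \<le> c k * t k" by blast
  qed
  ultimately show ?thesis unfolding critical_cone_def by blast
qed

lemma so_growth_along_seq:
  fixes f :: "'a::{real_normed_vector, heine_borel} \<Rightarrow> real" and G :: "'a \<Rightarrow> 'b::real_normed_vector"
  assumes freg: "so_epi_regular f x" and Greg: "so_gph_regular G x" and Gx: "G x \<in> K"
    and mscq: "MSCQ G K x" and osr: "outer_so_regular K (G x) (dir_deriv G x d)"
    and f1: "dir_deriv f x d = 0" and c0: "c0 > 0"
    and bound: "\<And>w. so_dir_deriv G x d w \<in> so_tangent_set K (G x) (dir_deriv G x d) \<Longrightarrow>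
      c0 \<le> so_dir_deriv f x d w"
    and t: "\<And>k. t k > 0" "t \<longlonglongrightarrow> 0" and dk: "dk \<longlonglongrightarrow> d"
    and feas: "\<And>k. G (x + t k *\<^sub>R dk k) \<in> K"
  shows "eventually (\<lambda>k. f x + c0 / 4 * (t k)\<^sup>2 < f (x + t k *\<^sub>R dk k)) sequentially"
proof -
  define w where "w k = (2 / t k) *\<^sub>R (dk k - d)" for k
  have path: "x + t k *\<^sub>R dk k = x + t k *\<^sub>R d + ((t k)\<^sup>2 / 2) *\<^sub>R w k" for k
    using t(1)[of k] by (simp add: w_def algebra_simps power2_eq_square)
  have "t k *\<^sub>R w k = 2 *\<^sub>R (dk k - d)" for k
    using t(1)[of k] by (simp add: w_def)
  then have tw: "(\<lambda>k. t k *\<^sub>R w k) \<longlonglongrightarrow> 0"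
    using tendsto_scaleR[OF tendsto_const LIM_zero[OF dk], of 2] by simp
  have "G (x + t k *\<^sub>R d + ((t k)\<^sup>2 / 2) *\<^sub>R w k) \<in> K" for k
    using feas[of k] by (simp only: path)
  with so_feasible_approx_seq[OF Greg Gx mscq osr t tw] obtain wh
    where wh: "\<And>k. so_dir_deriv G x d (wh k) \<in> so_tangent_set K (G x) (dir_deriv G x d)"
      and wh_w: "(\<lambda>k. norm (wh k - w k)) \<longlonglongrightarrow> 0"
    by blast
  obtain L where L: "\<And>d. L-lipschitz_on UNIV (so_dir_deriv f x d)"
    using so_dir_deriv_lipschitz freg unfolding so_epi_regular_def by blast
  define q where "q k = so_quot f x d (w k) (t k)" for k
  have lower: "c0 - L * norm (wh k - w k) + min 0 (q k - so_dir_deriv f x d (w k)) \<le> q k" for k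
  proof -
    have "c0 \<le> so_dir_deriv f x d (wh k)" by (rule bound[OF wh])
    also have "\<dots> \<le> so_dir_deriv f x d (w k) + L * norm (wh k - w k)"
      using lipschitz_on_normD[OF L[of d], of "wh k" "w k"] by (simp add: abs_le_iff)
    finally have "c0 \<le> so_dir_deriv f x d (w k) + L * norm (wh k - w k)" .
    moreover have "min 0 (q k - so_dir_deriv f x d (w k)) \<le> q k - so_dir_deriv f x d (w k)" by simp
    ultimately show ?thesis by linarith
  qed
  have "(\<lambda>k. c0 - L * norm (wh k - w k) + min 0 (q k - so_dir_deriv f x d (w k))) \<longlonglongrightarrow> c0 - L * 0 + 0"
    unfolding q_def by (intro tendsto_intros so_epi_regular_seq[OF freg t tw] wh_w)
  then have "eventually (\<lambda>k. c0 / 2 < c0 - L * norm (wh k - w k) + min 0 (q k - so_dir_deriv f x d (w k)))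
      sequentially"
    by (rule order_tendstoD) (use c0 in simp)
  then show ?thesis
  proof eventually_elim
    case (elim k)
    have tk: "t k > 0" by (rule t(1))
    have "(t k)\<^sup>2 / 2 * q k = f (x + t k *\<^sub>R dk k) - f x"
      using tk by (simp add: q_def so_quot_def f1 path)
    moreover have "(t k)\<^sup>2 / 2 * (c0 / 2) < (t k)\<^sup>2 / 2 * q k"
      using elim lower[of k] tk by (intro mult_strict_left_mono) auto
    moreover have "(t k)\<^sup>2 / 2 * (c0 / 2) = c0 / 4 * (t k)\<^sup>2" by simp
    ultimately show ?case by linarith
  qed
qed

lemma not_quadratic_growth_imp_seq:
  fixes f :: "'a::real_normed_vector \<Rightarrow> real"
  assumes "\<not> (\<exists>c>0. \<exists>N. open N \<and> x0 \<in> N \<and> (\<forall>x\<in>S \<inter> N. f x \<ge> f x0 + c * (norm (x - x0))\<^sup>2))"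
  shows "\<exists>x. (\<forall>k. x k \<in> S \<and> x k \<noteq> x0 \<and>
      f (x k) < f x0 + inverse (real (Suc k)) * (norm (x k - x0))\<^sup>2) \<and> x \<longlonglongrightarrow> x0"
proof -
  have "\<exists>y\<in>S \<inter> ball x0 (inverse (real (Suc k))). f y < f x0 + inverse (real (Suc k)) * (norm (y - x0))\<^sup>2"
    for k
    using assms by (metis open_ball centre_in_ball inverse_positive_iff_positive of_nat_0_less_iff
        zero_less_Suc not_le)
  then obtain x where x: "\<And>k. x k \<in> S" "\<And>k. dist x0 (x k) < inverse (real (Suc k))"
    and descent: "\<And>k. f (x k) < f x0 + inverse (real (Suc k)) * (norm (x k - x0))\<^sup>2"
    by (metis IntE mem_ball)
  have "x k \<noteq> x0" for k using descent[of k] by auto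
  moreover have "x \<longlonglongrightarrow> x0"
    using x(2) LIMSEQ_inverse_real_of_nat
    by (intro tendsto_sandwich[of "\<lambda>_. 0" "\<lambda>k. dist (x k) x0" sequentially "\<lambda>k. inverse (real (Suc k))",
          THEN tendsto_dist_iff[THEN iffD2]] always_eventually) (auto simp: dist_commute less_imp_le)
  ultimately show ?thesis using x(1) descent by blast
qed

lemma not_quadratic_growth_imp_descent_seq:
  fixes f :: "'a::{real_normed_vector, heine_borel} \<Rightarrow> real"
  assumes "\<not> (\<exists>c>0. \<exists>N. open N \<and> x0 \<in> N \<and> (\<forall>x\<in>S \<inter> N. f x \<ge> f x0 + c * (norm (x - x0))\<^sup>2))"
  obtains t dk d c where "\<And>k. t k > 0" "t \<longlonglongrightarrow> 0" "dk \<longlonglongrightarrow> d" "norm d = 1" "c \<longlonglongrightarrow> 0"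
    "\<And>k. x0 + t k *\<^sub>R dk k \<in> S" "\<And>k. f (x0 + t k *\<^sub>R dk k) < f x0 + c k * (t k)\<^sup>2"
proof -
  obtain y where y: "\<And>k. y k \<in> S" "\<And>k. y k \<noteq> x0" "y \<longlonglongrightarrow> x0"
    "\<And>k. f (y k) < f x0 + inverse (real (Suc k)) * (norm (y k - x0))\<^sup>2"
    using not_quadratic_growth_imp_seq[OF assms] by blast
  obtain \<phi> :: "nat \<Rightarrow> nat" and d where \<phi>: "strict_mono \<phi>" and d: "norm d = 1"
    and dk: "(\<lambda>k. (1 / norm (y (\<phi> k) - x0)) *\<^sub>R (y (\<phi> k) - x0)) \<longlonglongrightarrow> d"
    using unit_direction_convergent_subseq[of y x0, OF y(2)] by blast
  define t where "t k = norm (y (\<phi> k) - x0)" for k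
  have t_pos: "t k > 0" for k using y(2) by (simp add: t_def)
  have "(\<lambda>k. y (\<phi> k) - x0) \<longlonglongrightarrow> 0"
    using LIM_zero[OF LIMSEQ_subseq_LIMSEQ[OF y(3) \<phi>]] by (simp add: comp_def)
  then have t_lim: "t \<longlonglongrightarrow> 0" unfolding t_def[abs_def] by (rule tendsto_norm_zero)
  have y\<phi>: "y (\<phi> k) = x0 + t k *\<^sub>R ((1 / t k) *\<^sub>R (y (\<phi> k) - x0))" for k
    using t_pos[of k] by simp
  have c_lim: "(\<lambda>k. inverse (real (Suc (\<phi> k)))) \<longlonglongrightarrow> 0"
    using LIMSEQ_subseq_LIMSEQ[OF LIMSEQ_inverse_real_of_nat \<phi>] by (simp add: comp_def)
  show ?thesis
  proof (rule that[OF t_pos t_lim _ d c_lim])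
    show "(\<lambda>k. (1 / t k) *\<^sub>R (y (\<phi> k) - x0)) \<longlonglongrightarrow> d" using dk by (simp add: t_def)
    show "x0 + t k *\<^sub>R ((1 / t k) *\<^sub>R (y (\<phi> k) - x0)) \<in> S" for k
      using y(1)[of "\<phi> k"] y\<phi>[of k] by simp
    show "f (x0 + t k *\<^sub>R ((1 / t k) *\<^sub>R (y (\<phi> k) - x0)))
        < f x0 + inverse (real (Suc (\<phi> k))) * (t k)\<^sup>2" for k
      using y(4)[of "\<phi> k"] y\<phi>[of k] by (simp add: t_def)
  qed
qed

theorem corollary3p1:
  fixes f :: "'n::euclidean_space \<Rightarrow> real"
    and G :: "'n \<Rightarrow> 'm::euclidean_space"
    and K :: "'m set" and xs :: 'n
  assumes "closed K"
    and "G xs \<in> K"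
    and "so_epi_regular f xs"
    and "so_gph_regular G xs"
    and "MSCQ G K xs"
    and "\<forall>d. dir_deriv G xs d \<in> tangent_cone K (G xs) \<longrightarrow>
             outer_so_regular K (G xs) (dir_deriv G xs d)"
    and "\<forall>d. dir_deriv G xs d \<in> tangent_cone K (G xs) \<longrightarrow> dir_deriv f xs d \<ge> 0"
    and "\<forall>d\<in>critical_cone f G K xs - {0}.
           (INF w\<in>{w. so_dir_deriv G xs d w \<in> so_tangent_set K (G xs) (dir_deriv G xs d)}.
              ereal (so_dir_deriv f xs d w)) > 0"
  shows "\<exists>c>0. \<exists>N. open N \<and> xs \<in> N \<and>
           (\<forall>x\<in>{x. G x \<in> K} \<inter> N. f x \<ge> f xs + c * (norm (x - xs))\<^sup>2)"
proof (rule ccontr)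
  assume "\<not> ?thesis"
  then obtain t dk d c where t: "\<And>k. t k > 0" "t \<longlonglongrightarrow> 0" and dk: "dk \<longlonglongrightarrow> d" and "norm d = 1"
    and c: "c \<longlonglongrightarrow> 0" and feas': "\<And>k. xs + t k *\<^sub>R dk k \<in> {x. G x \<in> K}"
    and descent: "\<And>k. f (xs + t k *\<^sub>R dk k) < f xs + c k * (t k)\<^sup>2"
    using not_quadratic_growth_imp_descent_seq by blast
  have feas: "\<And>k. G (xs + t k *\<^sub>R dk k) \<in> K" using feas' by simp
  have f: "loc_lipschitz_at f xs" "dir_differentiable f xs d"
    and G: "loc_lipschitz_at G xs" "dir_differentiable G xs d"
    using assms(3,4) unfolding so_epi_regular_def so_gph_regular_def so_dir_differentiable_def by auto
  from critical_direction_of_descent_seq[OF f G t dk feas descent c]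
  have "d \<in> critical_cone f G K xs" .
  then have tangent: "dir_deriv G xs d \<in> tangent_cone K (G xs)" and f1: "dir_deriv f xs d = 0"
    and "0 < (INF w\<in>{w. so_dir_deriv G xs d w \<in> so_tangent_set K (G xs) (dir_deriv G xs d)}.
              ereal (so_dir_deriv f xs d w))"
    using assms(7,8) \<open>norm d = 1\<close> unfolding critical_cone_def by force+
  then obtain c0 where c0: "c0 > 0" and bound: "\<And>w. so_dir_deriv G xs d w \<in>
      so_tangent_set K (G xs) (dir_deriv G xs d) \<Longrightarrow> c0 \<le> so_dir_deriv f xs d w"
    using INF_ereal_pos_lower_bound by (metis mem_Collect_eq)
  have "outer_so_regular K (G xs) (dir_deriv G xs d)" using assms(6) tangent by blast
  from so_growth_along_seq[OF assms(3,4,2,5) this f1 c0 bound t dk feas]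
  have "eventually (\<lambda>k. f xs + c0 / 4 * (t k)\<^sup>2 < f (xs + t k *\<^sub>R dk k)) sequentially" .
  moreover have "eventually (\<lambda>k. c k < c0 / 4) sequentially"
    using order_tendstoD(2)[OF c, of "c0 / 4"] c0 by simp
  ultimately have "eventually (\<lambda>k. False) sequentially"
  proof eventually_elim
    case (elim k)
    have "c k * (t k)\<^sup>2 \<le> c0 / 4 * (t k)\<^sup>2" using elim(2) by (intro mult_right_mono) auto
    then show False using elim(1) descent[of k] by linarith
  qed
  then show False by simp
qed

end
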